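(* Let $G=(V,D,B)$ be a mixed graph. The Jacobian $J_G(0,I)$ of the covariance parametrization $\phi_G$, evaluated at $\Lambda=0$ and $\Omega=I$, has full column rank $|V|+|B|+|D|$ if and only if $G$ is simple.
   Context: A mixed graph with finite vertex set $V$ is a triple $G=(V,D,B)$ with $D$ a set of ordered pairs $(i,j)$, $i\ne j$ (directed edges $i\to j$) and $B$ a set of unordered pairs $\{i,j\}$, $i\ne j$ (bidirected edges); in general a pair of nodes may be joined by several edges (e.g. both $i\to j$ and $j\to i$, or $i\to j$ and $i\leftrightarrow j$). $G$ is simple if any two distinct nodes are joined by at most one edge of any type. $\mathbb{R}^D_{\mathrm{reg}}$ is the set of real $V\times V$ matrices $\Lambda$ with $\lambda_{ij}=0$ for $(i,j)\notin D$ and $I-\Lambda$ invertible; $\mathit{PD}(B)$ is the set of positive definite symmetric matrices $\Omega$ with $\omega_{ij}=0$ for $i\ne j$, $\{i,j\}\notin B$. The covariance parametrization is $\phi_G(\Lambda,\Omega)=(I-\Lambda)^{-T}\Omega(I-\Lambda)^{-1}$ on $\mathbb{R}^D_{\mathrm{reg}}\times\mathit{PD}(B)$, and $J_G$ is its Jacobian with respect to the $|D|+|V|+|B|$ free parameters $\lambda_{kl}$ ($(k,l)\in D$), $\omega_{ii}$ ($i\in V$), $\omega_{ij}$ ($\{i,j\}\in B$). *)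

theory Defs
  imports "HOL-Analysis.Analysis"
begin

definition mixed_graph :: "('v \<times> 'v) set \<Rightarrow> 'v set set \<Rightarrow> bool" where
  "mixed_graph D B \<longleftrightarrow> (\<forall>(i,j)\<in>D. i \<noteq> j) \<and> (\<forall>e\<in>B. \<exists>i j. i \<noteq> j \<and> e = {i,j})"

text \<open>Simple: any two distinct nodes joined by at most one edge (of any type).
  Since D and B are sets, the only possible multiple edges are i\<rightarrow>j with j\<rightarrow>i,
  or a directed edge together with a bidirected edge on the same pair.\<close>

definition simple_mixed_graph :: "('v \<times> 'v) set \<Rightarrow> 'v set set \<Rightarrow> bool" where
  "simple_mixed_graph D B \<longleftrightarrow>
     (\<forall>i j. \<not> ((i,j) \<in> D \<and> (j,i) \<in> D)) \<and> (\<forall>i j. \<not> ((i,j) \<in> D \<and> {i,j} \<in> B))"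

definition cov_param :: "real^'v^'v \<Rightarrow> real^'v^'v \<Rightarrow> real^'v^'v" where
  "cov_param L W = transpose (matrix_inv (mat 1 - L)) ** W ** matrix_inv (mat 1 - L)"

datatype 'v param = PLam 'v 'v | POmDiag 'v | POmBi "'v set"

definition params :: "('v \<times> 'v) set \<Rightarrow> 'v set set \<Rightarrow> 'v param set" where
  "params D B = {PLam k l | k l. (k,l) \<in> D} \<union> range POmDiag \<union> POmBi ` B"

definition unit_mat :: "'v \<Rightarrow> 'v \<Rightarrow> real^'v^'v" where
  "unit_mat i j = (\<chi> a b. if a = i \<and> b = j then 1 else 0)"

text \<open>Direction in (Lambda, Omega)-space corresponding to increasing one free parameter
  (for a symmetric off-diagonal omega_ij both entries (i,j) and (j,i) move).\<close>

fun param_dir :: "'v param \<Rightarrow> (real^'v^'v) \<times> (real^'v^'v)" where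
  "param_dir (PLam k l) = (unit_mat k l, 0)"
| "param_dir (POmDiag i) = (0, unit_mat i i)"
| "param_dir (POmBi e) =
     (0, (\<Sum>(i,j) \<in> {(i,j). i \<noteq> j \<and> e = {i,j}}. unit_mat i j))"

definition jac_col :: "real^'v^'v \<Rightarrow> real^'v^'v \<Rightarrow> 'v param \<Rightarrow> real^'v^'v" where
  "jac_col L W \<theta> = vector_derivative
     (\<lambda>t::real. cov_param (L + t *\<^sub>R fst (param_dir \<theta>)) (W + t *\<^sub>R snd (param_dir \<theta>))) (at 0)"

definition jac_full_col_rank :: "('v \<times> 'v) set \<Rightarrow> 'v set set \<Rightarrow> real^'v^'v \<Rightarrow> real^'v^'v \<Rightarrow> bool" where
  "jac_full_col_rank D B L W \<longleftrightarrow>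
     (\<forall>c :: 'v param \<Rightarrow> real.
        (\<Sum>\<theta>\<in>params D B. c \<theta> *\<^sub>R jac_col L W \<theta>) = 0 \<longrightarrow> (\<forall>\<theta>\<in>params D B. c \<theta> = 0))"

end

theory Submission
  imports Defs
begin

text \<open>At \<open>\<Lambda> = 0\<close>, \<open>\<Omega> = I\<close> each column of the Jacobian is the 0/1 indicator matrix of a
  symmetric pair of entries \<open>{(a, b), (b, a)}\<close>: \<open>\<lambda>\<^sub>k\<^sub>l\<close> and \<open>\<omega>\<^sub>k\<^sub>l\<close> both perturb the entries
  \<open>(k, l), (l, k)\<close> of \<open>\<Sigma>\<close>, and \<open>\<omega>\<^sub>i\<^sub>i\<close> the diagonal entry \<open>(i, i)\<close>. Two such pairs are
  either equal or disjoint, so the columns are linearly independent iff no two parameters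
  perturb the same pair, i.e. iff no two nodes are joined by two edges.\<close>

lemma matrix_inv_eqI:
  fixes A :: "'a::semiring_1^'n^'m"
  assumes "A ** B = mat 1" "B ** A = mat 1"
  shows "matrix_inv A = B"
proof -
  have inv: "A ** matrix_inv A = mat 1 \<and> matrix_inv A ** A = mat 1"
    unfolding matrix_inv_def using assms by (rule someI[of _ B, OF conjI])
  have "matrix_inv A = (matrix_inv A ** A) ** B"
    using assms(1) by (simp flip: matrix_mul_assoc)
  then show ?thesis
    using inv by simp
qed

lemma matrix_add_rdistrib: "(A + B) ** C = A ** C + B ** (C :: 'a::semiring_1^'k^'n)"
  by (vector matrix_matrix_mult_def sum.distrib[symmetric] field_simps)

lemma matrix_diff_ldistrib: "A ** (B - C) = A ** B - A ** (C :: 'a::ring_1^'k^'n)"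
  by (vector matrix_matrix_mult_def sum_subtractf[symmetric] field_simps)

lemma matrix_diff_rdistrib: "(A - B) ** C = A ** C - B ** (C :: 'a::ring_1^'k^'n)"
  by (vector matrix_matrix_mult_def sum_subtractf[symmetric] field_simps)

lemma transpose_zero [simp]: "transpose 0 = 0"
  by (simp add: transpose_def vec_eq_iff)

lemma transpose_add: "transpose (A + B) = transpose A + transpose B"
  by (simp add: transpose_def vec_eq_iff)

lemma bounded_bilinear_matrix_mult:
  "bounded_bilinear ((**) :: real^'n^'m \<Rightarrow> real^'k^'n \<Rightarrow> real^'k^'m)"
  unfolding bilinear_conv_bounded_bilinear[symmetric] bilinear_def
  by (auto intro!: linearI simp: matrix_add_ldistrib matrix_add_rdistrib matrix_scalar_ac
      simp flip: scalar_matrix_assoc)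

lemmas has_vector_derivative_matrix_mult[derivative_intros] =
  bounded_bilinear.has_vector_derivative[OF bounded_bilinear_matrix_mult]

lemma matrix_inv_one_minus_square_zero:
  fixes M :: "'a::ring_1^'n^'n"
  assumes "M ** M = 0"
  shows "matrix_inv (mat 1 - M) = mat 1 + M"
  using assms
  by (intro matrix_inv_eqI) (simp_all add: matrix_add_ldistrib matrix_add_rdistrib matrix_diff_ldistrib
      matrix_diff_rdistrib)

lemma cov_param_square_zero:
  assumes "M ** M = 0"
  shows "cov_param M W = transpose (mat 1 + M) ** W ** (mat 1 + M)"
  using assms by (simp add: cov_param_def matrix_inv_one_minus_square_zero)

lemma jac_col_identity_square_zero:
  fixes M N :: "real^'v::finite^'v"
  assumes "param_dir \<theta> = (M, N)" "M ** M = 0"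
  shows "jac_col 0 (mat 1) \<theta> = transpose M + N + M"
proof -
  have "cov_param (t *\<^sub>R M) (mat 1 + t *\<^sub>R N) =
      (mat 1 + t *\<^sub>R transpose M) ** (mat 1 + t *\<^sub>R N) ** (mat 1 + t *\<^sub>R M)" for t
    using assms(2)
    by (simp add: cov_param_square_zero transpose_add transpose_scalar matrix_scalar_ac
        flip: scalar_matrix_assoc)
  moreover have "((\<lambda>t. (mat 1 + t *\<^sub>R transpose M) ** (mat 1 + t *\<^sub>R N) ** (mat 1 + t *\<^sub>R M))
      has_vector_derivative transpose M + N + M) (at 0)"
    by (auto intro!: derivative_eq_intros)
  ultimately show ?thesis
    using assms(1) by (simp add: jac_col_def vector_derivative_at)
qed

lemma unit_mat_index: "unit_mat i j $ a $ b = (if (i, j) = (a, b) then 1 else 0)"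
  by (auto simp: unit_mat_def)

lemma sum_unit_mat:
  "(\<Sum>(i, j)\<in>S. unit_mat i j) = (\<chi> a b. indicator S (a, b) :: real^'v::finite^'v)"
proof -
  have "(\<Sum>(i, j)\<in>S. unit_mat i j) $ a $ b = (\<Sum>p\<in>S. if p = (a, b) then 1 else 0 :: real)" for a b
    by (simp add: case_prod_beta' unit_mat_index)
  then show ?thesis
    by (simp add: vec_eq_iff sum.delta'[OF finite] indicator_def)
qed

lemma unit_mat_square_zero: "k \<noteq> l \<Longrightarrow> unit_mat k l ** unit_mat k l = (0::real^'v::finite^'v)"
  by (auto simp: vec_eq_iff matrix_matrix_mult_def unit_mat_def intro!: sum.neutral)

lemma transpose_unit_mat: "transpose (unit_mat k l) = unit_mat l k"
  by (auto simp: vec_eq_iff transpose_def unit_mat_def)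

fun param_support :: "'v param \<Rightarrow> ('v \<times> 'v) set" where
  "param_support (PLam k l) = {(k, l), (l, k)}"
| "param_support (POmDiag i) = {(i, i)}"
| "param_support (POmBi e) = {(i, j). i \<noteq> j \<and> e = {i, j}}"

lemma jac_col_identity:
  fixes \<theta> :: "'v::finite param"
  assumes "\<And>k l. \<theta> = PLam k l \<Longrightarrow> k \<noteq> l"
  shows "jac_col 0 (mat 1) \<theta> = (\<chi> a b. indicator (param_support \<theta>) (a, b))"
proof (cases \<theta>)
  case (PLam k l)
  with assms have "k \<noteq> l" by simp
  then have "jac_col 0 (mat 1) \<theta> = unit_mat l k + unit_mat k l"
    using PLam by (simp add: jac_col_identity_square_zero unit_mat_square_zero transpose_unit_mat)
  also have "\<dots> = (\<Sum>(i, j)\<in>{(k, l), (l, k)}. unit_mat i j)"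
    using \<open>k \<noteq> l\<close> by simp
  finally show ?thesis
    using PLam by (simp add: sum_unit_mat)
next
  case (POmDiag i)
  then show ?thesis
    using sum_unit_mat[of "{(i, i)}"] by (simp add: jac_col_identity_square_zero)
next
  case (POmBi e)
  then show ?thesis
    by (simp add: jac_col_identity_square_zero sum_unit_mat)
qed

lemma sum_mult_indicator:
  fixes c :: "'p \<Rightarrow> real"
  assumes "finite P"
  shows "(\<Sum>p\<in>P. c p * indicator (S p) x) = sum c {p\<in>P. x \<in> S p}"
  unfolding sum.inter_filter[OF assms] by (rule sum.cong) (simp_all add: indicator_def)

lemma indicator_family_independent_iff_inj_on:
  fixes S :: "'p \<Rightarrow> 'i set"
  assumes "finite P" and nonempty: "\<And>p. p \<in> P \<Longrightarrow> S p \<noteq> {}"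
    and equal_or_disjoint: "\<And>p q. p \<in> P \<Longrightarrow> q \<in> P \<Longrightarrow> S p \<inter> S q \<noteq> {} \<Longrightarrow> S p = S q"
  shows "(\<forall>c. (\<forall>x. (\<Sum>p\<in>P. c p * indicator (S p) x) = (0::real)) \<longrightarrow> (\<forall>p\<in>P. c p = 0))
    \<longleftrightarrow> inj_on S P" (is "?independent \<longleftrightarrow> _")
proof
  assume independent: ?independent
  show "inj_on S P"
  proof (rule inj_onI, rule ccontr)
    fix p q assume "p \<in> P" "q \<in> P" "S p = S q" "p \<noteq> q"
    define c :: "'p \<Rightarrow> real" where "c r = (if r = p then 1 else if r = q then -1 else 0)" for r
    have "(\<Sum>r\<in>P. c r * indicator (S r) x) = (\<Sum>r\<in>{p, q}. c r * indicator (S r) x)" for x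
      using \<open>finite P\<close> \<open>p \<in> P\<close> \<open>q \<in> P\<close> by (intro sum.mono_neutral_right) (auto simp: c_def)
    also have "\<dots> x = indicator (S p) x - indicator (S q) x" for x
      using \<open>p \<noteq> q\<close> by (subst sum.insert) (auto simp: c_def)
    also have "\<dots> x = 0" for x
      using \<open>S p = S q\<close> by simp
    finally have "c p = 0"
      using independent \<open>p \<in> P\<close> by blast
    then show False
      by (simp add: c_def)
  qed
next
  assume "inj_on S P"
  show ?independent
  proof (intro allI impI ballI)
    fix c :: "'p \<Rightarrow> real" and p
    assume zero: "\<forall>x. (\<Sum>p\<in>P. c p * indicator (S p) x) = 0" and "p \<in> P"
    then obtain x where "x \<in> S p"
      using nonempty by blast
    have "{q \<in> P. x \<in> S q} = {p}"
      using \<open>x \<in> S p\<close> \<open>p \<in> P\<close> equal_or_disjoint inj_onD[OF \<open>inj_on S P\<close>] by blast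
    then show "c p = 0"
      using zero sum_mult_indicator[OF \<open>finite P\<close>, of c S x] by simp
  qed
qed

lemma finite_params: "finite (params D (B :: 'v::finite set set))"
proof -
  have "{PLam k l | k l. (k, l) \<in> D} = case_prod PLam ` D"
    by auto
  then show ?thesis
    unfolding params_def by simp
qed

lemma params_cases [consumes 2, case_names PLam POmDiag POmBi]:
  assumes "mixed_graph D B" "\<theta> \<in> params D B"
  obtains (PLam) k l where "(k, l) \<in> D" "k \<noteq> l" "\<theta> = PLam k l"
  | (POmDiag) i where "\<theta> = POmDiag i"
  | (POmBi) i j where "{i, j} \<in> B" "i \<noteq> j" "\<theta> = POmBi {i, j}"
  using assms unfolding mixed_graph_def params_def by fast

lemma param_support_POmBi: "i \<noteq> j \<Longrightarrow> param_support (POmBi {i, j}) = {(i, j), (j, i)}"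
  by (auto simp: doubleton_eq_iff)

lemma param_support_sym_pair:
  assumes "mixed_graph D B" "\<theta> \<in> params D B"
  obtains a b where "param_support \<theta> = {(a, b), (b, a)}"
  using assms by (cases rule: params_cases) (auto simp: param_support_POmBi simp del: param_support.simps(3))

lemma param_support_equal_or_disjoint:
  assumes "mixed_graph D B" "\<theta> \<in> params D B" "\<theta>' \<in> params D B"
    and "param_support \<theta> \<inter> param_support \<theta>' \<noteq> {}"
  shows "param_support \<theta> = param_support \<theta>'"
proof -
  obtain a b where "param_support \<theta> = {(a, b), (b, a)}"
    using param_support_sym_pair[OF assms(1,2)] .
  moreover obtain a' b' where "param_support \<theta>' = {(a', b'), (b', a')}"
    using param_support_sym_pair[OF assms(1,3)] .
  ultimately show ?thesis
    using assms(4) by auto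
qed

definition param_of_entry :: "('v \<times> 'v) set \<Rightarrow> 'v \<Rightarrow> 'v \<Rightarrow> 'v param" where
  "param_of_entry D a b =
    (if a = b then POmDiag a else if (a, b) \<in> D then PLam a b
     else if (b, a) \<in> D then PLam b a else POmBi {a, b})"

lemma simple_param_eq_param_of_entry:
  assumes "mixed_graph D B" "simple_mixed_graph D B" "\<theta> \<in> params D B"
    and "(a, b) \<in> param_support \<theta>"
  shows "\<theta> = param_of_entry D a b"
  using assms(1,3) proof (cases rule: params_cases)
  case (PLam k l)
  then show ?thesis
    using assms(2,4) by (auto simp: param_of_entry_def simple_mixed_graph_def)
next
  case (POmDiag i)
  then show ?thesis
    using assms(4) by (simp add: param_of_entry_def)
next
  case (POmBi i j)
  then have "a \<noteq> b" "{a, b} = {i, j}"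
    using assms(4) by auto
  with POmBi have "(a, b) \<notin> D" "(b, a) \<notin> D"
    using assms(2) insert_commute[of a b] unfolding simple_mixed_graph_def by metis+
  with POmBi \<open>a \<noteq> b\<close> \<open>{a, b} = {i, j}\<close> show ?thesis
    by (simp add: param_of_entry_def)
qed

lemma inj_on_param_support_iff_simple:
  assumes "mixed_graph D B"
  shows "inj_on param_support (params D B) \<longleftrightarrow> simple_mixed_graph D B"
proof
  assume "inj_on param_support (params D B)"
  show "simple_mixed_graph D B"
    unfolding simple_mixed_graph_def
  proof (intro conjI allI notI)
    fix i j assume "(i, j) \<in> D \<and> (j, i) \<in> D"
    then have "PLam i j \<in> params D B" "PLam j i \<in> params D B" "i \<noteq> j"
      using assms by (auto simp: params_def mixed_graph_def)
    then show False
      using inj_onD[OF \<open>inj_on param_support (params D B)\<close>, of "PLam i j" "PLam j i"] by auto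
  next
    fix i j assume "(i, j) \<in> D \<and> {i, j} \<in> B"
    then have "PLam i j \<in> params D B" "POmBi {i, j} \<in> params D B" "i \<noteq> j"
      using assms by (auto simp: params_def mixed_graph_def)
    then show False
      using inj_onD[OF \<open>inj_on param_support (params D B)\<close>, of "PLam i j" "POmBi {i, j}"]
      by (auto simp: param_support_POmBi simp del: param_support.simps(3))
  qed
next
  assume "simple_mixed_graph D B"
  show "inj_on param_support (params D B)"
  proof (rule inj_onI)
    fix \<theta> \<theta>' assume "\<theta> \<in> params D B" "\<theta>' \<in> params D B" "param_support \<theta> = param_support \<theta>'"
    moreover obtain a b where "(a, b) \<in> param_support \<theta>"
      using param_support_sym_pair[OF assms \<open>\<theta> \<in> params D B\<close>] by blast
    ultimately show "\<theta> = \<theta>'"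
      using simple_param_eq_param_of_entry[OF assms \<open>simple_mixed_graph D B\<close>] by metis
  qed
qed

lemma sum_scaleR_matrix_eq_0_iff:
  fixes g :: "'p \<Rightarrow> 'n::finite \<times> 'm::finite \<Rightarrow> real"
  shows "(\<Sum>p\<in>P. c p *\<^sub>R (\<chi> i j. g p (i, j))) = 0 \<longleftrightarrow> (\<forall>x. (\<Sum>p\<in>P. c p * g p x) = 0)"
proof -
  have "(\<Sum>p\<in>P. c p *\<^sub>R (\<chi> i j. g p (i, j))) $ i $ j = (\<Sum>p\<in>P. c p * g p (i, j))" for i j
    by simp
  then show ?thesis
    by (simp add: vec_eq_iff)
qed

lemma jac_full_col_rank_identity_iff:
  assumes "mixed_graph D B"
  shows "jac_full_col_rank D B 0 (mat 1) \<longleftrightarrow>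
    (\<forall>c. (\<forall>x. (\<Sum>\<theta>\<in>params D B. c \<theta> * indicator (param_support \<theta>) x) = (0::real))
      \<longrightarrow> (\<forall>\<theta>\<in>params D B. c \<theta> = 0))"
proof -
  have "jac_col 0 (mat 1) \<theta> = (\<chi> a b. indicator (param_support \<theta>) (a, b))"
    if "\<theta> \<in> params D B" for \<theta>
    using that assms by (intro jac_col_identity) (auto simp: params_def mixed_graph_def)
  then have "(\<Sum>\<theta>\<in>params D B. c \<theta> *\<^sub>R jac_col 0 (mat 1) \<theta>)
      = (\<Sum>\<theta>\<in>params D B. c \<theta> *\<^sub>R (\<chi> a b. indicator (param_support \<theta>) (a, b)))" for c
    by simp
  then show ?thesis
    unfolding jac_full_col_rank_def
    by (simp only: sum_scaleR_matrix_eq_0_iff[where g = "\<lambda>\<theta>. indicator (param_support \<theta>)"])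
qed

theorem lemma2:
  fixes D :: "('v::finite \<times> 'v) set" and B :: "'v set set"
  assumes "mixed_graph D B"
  shows "jac_full_col_rank D B 0 (mat 1) \<longleftrightarrow> simple_mixed_graph D B"
proof -
  have "jac_full_col_rank D B 0 (mat 1) \<longleftrightarrow> inj_on param_support (params D B)"
    unfolding jac_full_col_rank_identity_iff[OF assms]
  proof (rule indicator_family_independent_iff_inj_on[OF finite_params])
    show "param_support \<theta> \<noteq> {}" if "\<theta> \<in> params D B" for \<theta>
      using param_support_sym_pair[OF assms that] by blast
  qed (rule param_support_equal_or_disjoint[OF assms])
  also have "\<dots> \<longleftrightarrow> simple_mixed_graph D B"
    by (rule inj_on_param_support_iff_simple[OF assms])
  finally show ?thesis .
qed

end
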